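(* Consider the problem and algorithm AC2CD described in the context. At every outer iteration $k$, \[ f(x^k)-f(x^{k+1})\ge\frac{\gamma}{A_u}\,\|x^{k+1}-x^k\|_{\langle j(k)\rangle}^2. \]
   Context: Problem: minimize $f(x)$ subject to $e^T x = b$ and $l_i \le x_i \le u_i$ ($i=1,\dots,n$), where $n\ge 2$, $e$ is the all-ones vector, $b\in\mathbb{R}$, $l_i\in\mathbb{R}\cup\{-\infty\}$, $u_i\in\mathbb{R}\cup\{+\infty\}$, $l_i<u_i$, and $f:\mathbb{R}^n\to\mathbb{R}$ is continuously differentiable with $\nabla f$ Lipschitz continuous on $\mathbb{R}^n$. $\mathcal F$ is the feasible set, $e_i$ the $i$th unit vector. $\|x\|_{\langle j\rangle}=\sqrt{\sum_{i\ne j}x_i^2}$. For $x\in\mathcal F$, $D_h(x)=\min\{x_h-l_h,u_h-x_h\}$. Algorithm AC2CD with parameters $\tau\in(0,1]$, $\gamma,\delta\in(0,1)$, $0<A_l\le A_u<\infty$ and starting point $x^0\in\mathcal F$: for $k=0,1,2,\dots$: let $D^k=\max_h D_h(x^k)$; choose $j(k)$ with $D_{j(k)}(x^k)\ge\tau D^k$; choose a permutation $(p^k_1,\dots,p^k_n)$ of $\{1,\dots,n\}$; set $z^{k,1}=x^k$; for $i=1,\dots,n$ (inner iteration $(k,i)$): $g^{k,i}=\nabla_{j(k)}f(z^{k,i})-\nabla_{p^k_i}f(z^{k,i})$, $d^{k,i}=g^{k,i}(e_{p^k_i}-e_{j(k)})$; $\bar\alpha^{k,i}=\min\{u_{p^k_i}-z^{k,i}_{p^k_i},z^{k,i}_{j(k)}-l_{j(k)}\}/g^{k,i}$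 if $g^{k,i}>0$, $=\min\{z^{k,i}_{p^k_i}-l_{p^k_i},u_{j(k)}-z^{k,i}_{j(k)}\}/|g^{k,i}|$ if $g^{k,i}<0$, $=0$ if $g^{k,i}=0$; choose $A^{k,i}\in[A_l,A_u]$, set $\Delta^{k,i}=\min\{\bar\alpha^{k,i},A^{k,i}\}$; starting from $\alpha=\Delta^{k,i}$, while $f(z^{k,i}+\alpha d^{k,i})>f(z^{k,i})+\gamma\alpha\nabla f(z^{k,i})^Td^{k,i}$ replace $\alpha$ by $\delta\alpha$; $\alpha^{k,i}$ is the final $\alpha$ and $z^{k,i+1}=z^{k,i}+\alpha^{k,i}d^{k,i}$. Then $x^{k+1}=z^{k,n+1}$. Standing assumptions: $\mathcal L_0=\{x\in\mathcal F: f(x)\le f(x^0)\}$ is nonempty and compact, and every $x\in\mathcal L_0$ has some index $i$ with $l_i<x_i<u_i$. *)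

theory Defs
  imports "HOL-Analysis.Analysis" "HOL-Library.Extended_Real"
begin

text \<open>Vectors of R^n are rendered as real^'n (index type 'n, n = CARD('n)).
  Bounds l_i in R \<union> {-\<infinity>}, u_i in R \<union> {+\<infinity>} are extended reals.\<close>

definition feasible :: "('n::finite \<Rightarrow> ereal) \<Rightarrow> ('n \<Rightarrow> ereal) \<Rightarrow> real \<Rightarrow> real^'n \<Rightarrow> bool" where
  "feasible l u b x \<longleftrightarrow> (\<Sum>i\<in>UNIV. x $ i) = b \<and> (\<forall>i. l i \<le> ereal (x $ i) \<and> ereal (x $ i) \<le> u i)"

definition Dh :: "('n::finite \<Rightarrow> ereal) \<Rightarrow> ('n \<Rightarrow> ereal) \<Rightarrow> real^'n \<Rightarrow> 'n \<Rightarrow> ereal" where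
  "Dh l u x h = min (ereal (x $ h) - l h) (u h - ereal (x $ h))"

definition norm_excl :: "'n::finite \<Rightarrow> real^'n \<Rightarrow> real" where
  "norm_excl j x = sqrt (\<Sum>i\<in>UNIV - {j}. (x $ i)^2)"

text \<open>maximal feasible step \<bar>\<alpha> along d = g (e_p - e_j) from z\<close>
definition alpha_bar :: "('n::finite \<Rightarrow> ereal) \<Rightarrow> ('n \<Rightarrow> ereal) \<Rightarrow> real^'n \<Rightarrow> 'n \<Rightarrow> 'n \<Rightarrow> real \<Rightarrow> ereal" where
  "alpha_bar l u z j p g =
     (if g > 0 then min (u p - ereal (z $ p)) (ereal (z $ j) - l j) / ereal g
      else if g < 0 then min (ereal (z $ p) - l p) (u j - ereal (z $ j)) / ereal \<bar>g\<bar>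
      else 0)"

end

theory Submission
  imports Defs
begin

text \<open>An inner step moves along d = g (e_p - e_j) with g = \<nabla>_j f(z) - \<nabla>_p f(z), so
  \<nabla>f(z)^T d = -g^2, and its step size satisfies 0 \<le> \<alpha> \<le> A \<le> A_u. The Armijo condition
  then gives f(z) - f(z + \<alpha> d) \<ge> \<gamma> \<alpha> g^2 \<ge> (\<gamma>/A_u) (\<alpha> g)^2, and since \<alpha> does not
  exceed the maximal feasible step the iterate stays feasible, which keeps the next maximal
  feasible step nonnegative. As p^k is a permutation, every coordinate q \<noteq> j(k) moves exactly
  once during an outer iteration, by \<alpha> g at the inner step with p = q. Hence the squared norm
  of x^(k+1) - x^k with coordinate j(k) left out is at most the sum of the (\<alpha> g)^2, while the
  decreases of f over the inner steps telescope.\<close>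

lemma feasible_pair_step:
  fixes z :: "real^'n::finite"
  assumes feas: "feasible l u b z" and "0 \<le> t"
    and up: "ereal t \<le> u p - ereal (z $ p)" and down: "ereal t \<le> ereal (z $ j) - l j"
  shows "feasible l u b (z + t *\<^sub>R (axis p 1 - axis j 1))"
proof -
  have box: "l i \<le> ereal (z $ i) \<and> ereal (z $ i) \<le> u i" for i
    using feas by (simp add: feasible_def)
  have "ereal (z $ p + t) \<le> u p" and "l j \<le> ereal (z $ j - t)"
    using up down by (cases "u p"; cases "l j"; simp)+
  moreover have "l i \<le> ereal (z $ i + t)" "ereal (z $ i - t) \<le> u i" for i
    using box[of i] \<open>0 \<le> t\<close> by (auto intro: order_trans[of _ "ereal (z $ i)"])
  ultimately have "l i \<le> ereal (z $ i + t * (axis p 1 $ i - axis j 1 $ i))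
           \<and> ereal (z $ i + t * (axis p 1 $ i - axis j 1 $ i)) \<le> u i" for i
    using box[of i] by (cases "i = p"; cases "i = j"; simp add: axis_def)
  moreover have "(\<Sum>i\<in>UNIV. (axis p 1 - axis j 1 :: real^'n) $ i) = 0"
    by (simp add: sum.distrib sum_subtractf axis_def)
  ultimately show ?thesis
    using feas by (simp add: feasible_def sum.distrib sum_distrib_left[symmetric])
qed

lemma feasible_step_le_alpha_bar:
  fixes z :: "real^'n::finite"
  assumes feas: "feasible l u b z" and "0 \<le> a" and a_le: "ereal a \<le> alpha_bar l u z j p g"
  shows "feasible l u b (z + a *\<^sub>R (g *\<^sub>R (axis p 1 - axis j 1)))"
proof (cases g "0::real" rule: linorder_cases)
  case less
  then have "ereal (a * \<bar>g\<bar>) \<le> min (ereal (z $ p) - l p) (u j - ereal (z $ j))"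
    using a_le by (simp add: alpha_bar_def ereal_le_divide_pos mult.commute)
  then have "feasible l u b (z + (a * \<bar>g\<bar>) *\<^sub>R (axis j 1 - axis p 1))"
    using feas \<open>0 \<le> a\<close> by (intro feasible_pair_step) auto
  with less show ?thesis
    by (simp add: algebra_simps)
next
  case equal
  with feas show ?thesis by simp
next
  case greater
  then have "ereal (a * g) \<le> min (u p - ereal (z $ p)) (ereal (z $ j) - l j)"
    using a_le by (simp add: alpha_bar_def ereal_le_divide_pos mult.commute)
  then have "feasible l u b (z + (a * g) *\<^sub>R (axis p 1 - axis j 1))"
    using feas \<open>0 \<le> a\<close> greater by (intro feasible_pair_step) auto
  then show ?thesis
    by simp
qed

lemma alpha_bar_nonneg:
  assumes "feasible l u b z"
  shows "0 \<le> alpha_bar l u z j p g"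
proof -
  have "0 \<le> u i - ereal (z $ i)" "0 \<le> ereal (z $ i) - l i" for i
    using assms by (simp_all add: feasible_def ereal_diff_positive)
  then show ?thesis
    by (simp add: alpha_bar_def)
qed

lemma backtracking_step_bounds:
  fixes ab :: ereal
  assumes "0 \<le> ab" "0 \<le> A" "0 \<le> del" "del \<le> 1"
    and a_def: "a = del ^ m * real_of_ereal (min ab (ereal A))"
  shows "0 \<le> a" "a \<le> A" "ereal a \<le> ab"
proof -
  have "0 \<le> min ab (ereal A)" "min ab (ereal A) \<le> ereal A"
    using assms(1,2) by simp_all
  then obtain Delta where Delta: "min ab (ereal A) = ereal Delta"
    by (cases "min ab (ereal A)") auto
  then have "0 \<le> Delta" "Delta \<le> A" "ereal Delta \<le> ab"
    using assms(1,2) by (simp_all add: min_def split: if_splits)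
  moreover have "0 \<le> del ^ m" "del ^ m \<le> 1"
    using assms(3,4) by (simp_all add: power_le_one)
  ultimately have "0 \<le> a" "a \<le> Delta"
    by (simp_all add: a_def Delta mult_left_le_one_le)
  then show "0 \<le> a" "a \<le> A" "ereal a \<le> ab"
    using \<open>Delta \<le> A\<close> \<open>ereal Delta \<le> ab\<close> by (auto intro: order_trans[of _ "ereal Delta"])
qed

lemma armijo_sufficient_decrease:
  fixes f :: "'a::real_vector \<Rightarrow> real"
  assumes armijo: "f (z + a *\<^sub>R d) \<le> f z + gam * a * slope" and slope: "slope = - g\<^sup>2"
    and "0 \<le> gam" "0 \<le> a" "a \<le> Au"
  shows "gam / Au * (a * g)\<^sup>2 \<le> f z - f (z + a *\<^sub>R d)"
proof -
  have "a / Au \<le> 1"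
    using assms(4,5) by (cases "Au = 0") auto
  then have "gam / Au * (a * g)\<^sup>2 = (gam * a * g\<^sup>2) * (a / Au)"
    by (simp add: power2_eq_square)
  also have "\<dots> \<le> gam * a * g\<^sup>2"
    using \<open>a / Au \<le> 1\<close> assms(3,4) by (intro mult_left_le) simp_all
  also have "\<dots> \<le> f z - f (z + a *\<^sub>R d)"
    using armijo slope by simp
  finally show ?thesis .
qed

lemma line_search_pair_step:
  fixes zz z' gr :: "real^'n::finite" and jj pp :: 'n and f :: "real^'n \<Rightarrow> real"
  assumes feas: "feasible l u b zz"
    and "0 \<le> A" "A \<le> Au" "0 \<le> del" "del \<le> 1" "0 \<le> gam"
    and line_search: "let g = gr $ jj - gr $ pp; d = g *\<^sub>R (axis pp 1 - axis jj 1);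
          Delta = real_of_ereal (min (alpha_bar l u zz jj pp g) (ereal A))
        in f (zz + (del ^ m * Delta) *\<^sub>R d) \<le> f zz + gam * (del ^ m * Delta) * (gr \<bullet> d)
          \<and> a = del ^ m * Delta \<and> z' = zz + a *\<^sub>R d"
  shows "feasible l u b z' \<and> gam / Au * (a * (gr $ jj - gr $ pp))\<^sup>2 \<le> f zz - f z'
    \<and> z' = zz + (a * (gr $ jj - gr $ pp)) *\<^sub>R (axis pp 1 - axis jj 1)"
proof -
  define g where "g = gr $ jj - gr $ pp"
  define d :: "real^'n" where "d = g *\<^sub>R (axis pp 1 - axis jj 1)"
  have armijo: "f (zz + a *\<^sub>R d) \<le> f zz + gam * a * (gr \<bullet> d)"
    and a_def: "a = del ^ m * real_of_ereal (min (alpha_bar l u zz jj pp g) (ereal A))"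
    and z': "z' = zz + a *\<^sub>R d"
    using line_search by (simp_all add: Let_def g_def d_def)
  note a = backtracking_step_bounds[OF alpha_bar_nonneg[OF feas] \<open>0 \<le> A\<close> \<open>0 \<le> del\<close> \<open>del \<le> 1\<close> a_def]
  have "gr \<bullet> d = - g\<^sup>2"
    by (simp add: d_def g_def inner_diff_right inner_axis power2_eq_square algebra_simps)
  with armijo a \<open>0 \<le> gam\<close> \<open>A \<le> Au\<close> have "gam / Au * (a * g)\<^sup>2 \<le> f zz - f z'"
    unfolding z' by (intro armijo_sufficient_decrease) auto
  moreover have "feasible l u b z'"
    unfolding z' d_def using feas a(1,3) by (rule feasible_step_le_alpha_bar)
  ultimately show ?thesis
    by (simp add: z' d_def g_def)
qed

lemma sweep_coordinate:
  fixes z :: "nat \<Rightarrow> real^'n::finite"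
  assumes perm: "bij_betw p {1..CARD('n)} UNIV"
    and update: "\<And>k. k \<in> {1..CARD('n)} \<Longrightarrow> z (Suc k) = z k + c k *\<^sub>R (axis (p k) 1 - axis j 1)"
    and i: "i \<in> {1..CARD('n)}" "p i \<noteq> j"
  shows "(z (CARD('n) + 1) - z 1) $ p i = c i"
proof -
  let ?n = "CARD('n)"
  have "(z (?n + 1) - z 1) $ p i = (\<Sum>k = 1..?n. z (Suc k) $ p i - z k $ p i)"
    using sum_Suc_diff[of 1 ?n "\<lambda>k. z k $ p i"] by simp
  also have "\<dots> = (\<Sum>k = 1..?n. if k = i then c k else 0)"
  proof (rule sum.cong)
    fix k assume k: "k \<in> {1..?n}"
    have "p k = p i \<longleftrightarrow> k = i"
      using perm k i(1) unfolding bij_betw_def by (meson inj_on_eq_iff)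
    then show "z (Suc k) $ p i - z k $ p i = (if k = i then c k else 0)"
      using update[OF k] i(2) by (auto simp: axis_def)
  qed simp
  also have "\<dots> = c i"
    using i(1) by simp
  finally show ?thesis .
qed

lemma norm_excl_sweep_le:
  fixes z :: "nat \<Rightarrow> real^'n::finite"
  assumes perm: "bij_betw p {1..CARD('n)} UNIV"
    and update: "\<And>k. k \<in> {1..CARD('n)} \<Longrightarrow> z (Suc k) = z k + c k *\<^sub>R (axis (p k) 1 - axis j 1)"
  shows "(norm_excl j (z (CARD('n) + 1) - z 1))\<^sup>2 \<le> (\<Sum>i = 1..CARD('n). (c i)\<^sup>2)"
proof -
  let ?n = "CARD('n)" and ?v = "z (CARD('n) + 1) - z 1"
  let ?I = "{i \<in> {1..?n}. p i \<noteq> j}"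
  have "UNIV - {j} = p ` ?I"
    using perm unfolding bij_betw_def by blast
  moreover have "inj_on p ?I"
    using perm unfolding bij_betw_def by (rule inj_on_subset[OF conjunct1]) blast
  ultimately have "(norm_excl j ?v)\<^sup>2 = (\<Sum>i\<in>?I. (?v $ p i)\<^sup>2)"
    by (simp add: norm_excl_def sum_nonneg sum.reindex)
  also have "\<dots> = (\<Sum>i\<in>?I. (c i)\<^sup>2)"
    using sweep_coordinate[OF perm update] by (intro sum.cong) auto
  also have "\<dots> \<le> (\<Sum>i = 1..?n. (c i)\<^sup>2)"
    by (intro sum_mono2) auto
  finally show ?thesis .
qed

lemma sweep_sufficient_decrease:
  fixes z :: "nat \<Rightarrow> real^'n::finite" and f :: "real^'n \<Rightarrow> real"
  assumes perm: "bij_betw p {1..CARD('n)} UNIV" and "0 \<le> C" and "P (z 1)"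
    and pair_step: "\<And>k. k \<in> {1..CARD('n)} \<Longrightarrow> P (z k) \<Longrightarrow> P (z (Suc k))
      \<and> C * (c k)\<^sup>2 \<le> f (z k) - f (z (Suc k)) \<and> z (Suc k) = z k + c k *\<^sub>R (axis (p k) 1 - axis j 1)"
  shows "P (z (CARD('n) + 1)) \<and>
    C * (norm_excl j (z (CARD('n) + 1) - z 1))\<^sup>2 \<le> f (z 1) - f (z (CARD('n) + 1))"
proof -
  let ?n = "CARD('n)"
  have invariant: "P (z k)" if "1 \<le> k" "k \<le> ?n + 1" for k
    using that(1)
  proof (induction k rule: dec_induct)
    case base
    show ?case by fact
  next
    case (step k)
    then have "k \<in> {1..?n}"
      using that(2) by simp
    with step.IH pair_step show ?case
      by blast
  qed
  have descent: "C * (c k)\<^sup>2 \<le> f (z k) - f (z (Suc k)) \<and> z (Suc k) = z k + c k *\<^sub>R (axis (p k) 1 - axis j 1)"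
    if "k \<in> {1..?n}" for k
  proof -
    have "P (z k)"
      using invariant that by simp
    from pair_step[OF that this] show ?thesis
      by (rule conjunct2)
  qed
  have "(norm_excl j (z (?n + 1) - z 1))\<^sup>2 \<le> (\<Sum>k = 1..?n. (c k)\<^sup>2)"
    using descent by (intro norm_excl_sweep_le[OF perm]) blast
  then have "C * (norm_excl j (z (?n + 1) - z 1))\<^sup>2 \<le> (\<Sum>k = 1..?n. C * (c k)\<^sup>2)"
    unfolding sum_distrib_left[symmetric] using \<open>0 \<le> C\<close> by (rule mult_left_mono)
  also have "\<dots> \<le> (\<Sum>k = 1..?n. f (z k) - f (z (Suc k)))"
    using descent by (intro sum_mono) blast
  also have "\<dots> = f (z 1) - f (z (?n + 1))"
    using sum_Suc_diff[of 1 ?n "\<lambda>k. - f (z k)"] by simp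
  finally show ?thesis
    using invariant by simp
qed

theorem proposition3:
  fixes f :: "real^'n::finite \<Rightarrow> real"
    and grad :: "real^'n \<Rightarrow> real^'n"
    and l u :: "'n \<Rightarrow> ereal" and b :: real
    and tau gam del Al Au :: real
    and x :: "nat \<Rightarrow> real^'n"
    and j :: "nat \<Rightarrow> 'n"
    and p :: "nat \<Rightarrow> nat \<Rightarrow> 'n"
    and z :: "nat \<Rightarrow> nat \<Rightarrow> real^'n"
    and A alpha :: "nat \<Rightarrow> nat \<Rightarrow> real"
    and m :: "nat \<Rightarrow> nat \<Rightarrow> nat"
  assumes n2: "CARD('n) \<ge> 2"
    and lu: "\<And>i. l i < u i" "\<And>i. l i \<noteq> \<infinity>" "\<And>i. u i \<noteq> -\<infinity>"
    and deriv: "\<And>y. (f has_derivative (\<lambda>h. grad y \<bullet> h)) (at y)"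
    and lipschitz: "\<exists>L. \<forall>y w. norm (grad y - grad w) \<le> L * norm (y - w)"
    and params: "0 < tau" "tau \<le> 1" "0 < gam" "gam < 1" "0 < del" "del < 1" "0 < Al" "Al \<le> Au"
    and x0: "feasible l u b (x 0)"
    and L0_compact: "compact {y. feasible l u b y \<and> f y \<le> f (x 0)}"
    and L0_nonempty: "{y. feasible l u b y \<and> f y \<le> f (x 0)} \<noteq> {}"
    and L0_interior: "\<And>y. feasible l u b y \<Longrightarrow> f y \<le> f (x 0) \<Longrightarrow>
                         \<exists>i. l i < ereal (y $ i) \<and> ereal (y $ i) < u i"
    \<comment> \<open>choice of j(k)\<close>
    and jk: "\<And>k. Dh l u (x k) (j k) \<ge> ereal tau * Max (range (Dh l u (x k)))"
    \<comment> \<open>permutation (p^k_1, ..., p^k_n) of the indices\<close>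
    and perm: "\<And>k. bij_betw (p k) {1..CARD('n)} UNIV"
    and z_start: "\<And>k. z k 1 = x k"
    and x_next: "\<And>k. x (Suc k) = z k (CARD('n) + 1)"
    and A_range: "\<And>k i. i \<in> {1..CARD('n)} \<Longrightarrow> Al \<le> A k i \<and> A k i \<le> Au"
    \<comment> \<open>line search: alpha^{k,i} = del^m * Delta^{k,i}, m the number of reductions
        (first m for which the Armijo condition holds)\<close>
    and linesearch: "\<And>k i. i \<in> {1..CARD('n)} \<Longrightarrow>
       (let zz = z k i; jj = j k; pp = p k i;
            g = grad zz $ jj - grad zz $ pp;
            d = g *\<^sub>R (axis pp 1 - axis jj 1);
            Delta = real_of_ereal (min (alpha_bar l u zz jj pp g) (ereal (A k i)));
            armijo = (\<lambda>a. f (zz + a *\<^sub>R d) \<le> f zz + gam * a * (grad zz \<bullet> d))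
        in (\<forall>m'<m k i. \<not> armijo (del ^ m' * Delta))
           \<and> armijo (del ^ m k i * Delta)
           \<and> alpha k i = del ^ m k i * Delta
           \<and> z k (Suc i) = zz + alpha k i *\<^sub>R d)"
  shows "\<forall>k. f (x k) - f (x (Suc k)) \<ge> gam / Au * (norm_excl (j k) (x (Suc k) - x k))^2"
proof -
  define c where "c k i = alpha k i * (grad (z k i) $ j k - grad (z k i) $ p k i)" for k i
  have inner_step: "feasible l u b (z k (Suc i)) \<and> gam / Au * (c k i)\<^sup>2 \<le> f (z k i) - f (z k (Suc i))
      \<and> z k (Suc i) = z k i + c k i *\<^sub>R (axis (p k i) 1 - axis (j k) 1)"
    if "i \<in> {1..CARD('n)}" "feasible l u b (z k i)" for k i
    unfolding c_def using that A_range[OF that(1), of k] params linesearch[OF that(1), of k]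
    by (intro line_search_pair_step[where A = "A k i" and del = del and m = "m k i"])
      (auto simp: Let_def)
  have "0 \<le> gam / Au"
    using params by simp
  have outer_step: "feasible l u b (x (Suc k))
      \<and> gam / Au * (norm_excl (j k) (x (Suc k) - x k))\<^sup>2 \<le> f (x k) - f (x (Suc k))"
    if "feasible l u b (x k)" for k
    using sweep_sufficient_decrease[OF perm \<open>0 \<le> gam / Au\<close>, of "feasible l u b" "z k"] inner_step that
    unfolding z_start x_next[symmetric] by blast
  have "feasible l u b (x k)" for k
    by (induction k) (use x0 outer_step in auto)
  with outer_step show ?thesis
    by auto
qed

end
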